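(* (a) NDisc and PosDisc are reducible to each other. (b) UDisc and AsDisc are reducible to each other.
   Context: A probabilistic weighted automaton over a finite alphabet $\Sigma$ is a tuple $A=(Q,\rho_I,\Sigma,\delta,\gamma)$ where $Q$ is a finite set of states, $\rho_I$ is a probability distribution on $Q$, $\delta:Q\times\Sigma\to\mathcal D(Q)$ assigns to each state and letter a probability distribution on $Q$, and $\gamma:Q\times\Sigma\times Q\to\mathbb Q$ is a weight function. A run over an infinite word $w=\sigma_1\sigma_2\dots$ is a sequence $r=q_0\sigma_1q_1\sigma_2\dots$ with $\rho_I(q_0)>0$ and $\delta(q_i,\sigma_{i+1})(q_{i+1})>0$ for all $i$; its weight sequence is $\gamma(r)=v_0v_1\dots$ with $v_i=\gamma(q_i,\sigma_{i+1},q_{i+1})$. For each $w$, the probabilities of finite run prefixes $\rho_I(q_0)\prod_{i=1}^k\delta(q_{i-1},\sigma_i)(q_i)$ induce a probability measure $\mathbb P^A$ on runs over $w$. For a value function $\mathrm{Val}$, the positive semantics is $L^{>0}_A(w)=\sup\{\eta\mid \mathbb P^A(\{r:\mathrm{Val}(\gamma(r))\ge\eta\})>0\}$ and the almost-sure semantics is $L^{=1}_A(w)=\sup\{\eta\mid \mathbb P^A(\{r:\mathrm{Val}(\gamma(r))\ge\eta\})=1\}$. Ignoring probabilities (initial states are those with $\rho_I(q)>0$, transitions those with $\delta(q,\sigma)(q')>0$) gives a non-probabilistic automaton; interpreted as nondeterministic its language is $\sup\{\mathrm{Val}(\gamma(r))\mid r\text{ run over }w\}$, interpreted as universal its language is $\inf\{\mathrm{Val}(\gamma(r))\mid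 r\text{ run over }w\}$. The discounted-sum value function with discount factor $0<\lambda<1$ is $\mathsf{Disc}_\lambda(v)=\sum_{i=0}^\infty\lambda^i v_i$; each $\mathsf{Disc}$-automaton comes with its own discount factor $\lambda\in(0,1)$. NDisc, UDisc, PosDisc, AsDisc denote the classes of $\mathsf{Disc}$-automata under nondeterministic, universal, positive and almost-sure semantics. A class $\mathcal C$ is reducible to $\mathcal C'$ if for every $A\in\mathcal C$ there is $A'\in\mathcal C'$ over the same alphabet defining the same quantitative language $\Sigma^\omega\to\mathbb R$. *)

theory Defs
  imports "HOL-Probability.Probability"
begin

text \<open>Probabilistic weighted automata over a finite alphabet 'a (type class finite).\<close>

record 'a pwa =
  pwa_states :: "nat set"
  pwa_init   :: "nat \<Rightarrow> real"
  pwa_trans  :: "nat \<Rightarrow> 'a \<Rightarrow> nat \<Rightarrow> real"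
  pwa_weight :: "nat \<Rightarrow> 'a \<Rightarrow> nat \<Rightarrow> rat"
  pwa_disc   :: real

definition is_distr_on :: "nat set \<Rightarrow> (nat \<Rightarrow> real) \<Rightarrow> bool" where
  "is_distr_on Q d \<longleftrightarrow> (\<forall>q. 0 \<le> d q) \<and> (\<forall>q. q \<notin> Q \<longrightarrow> d q = 0) \<and> (\<Sum>q\<in>Q. d q) = 1"

definition wf_disc_aut :: "'a pwa \<Rightarrow> bool" where
  "wf_disc_aut A \<longleftrightarrow> finite (pwa_states A)
     \<and> is_distr_on (pwa_states A) (pwa_init A)
     \<and> (\<forall>q\<in>pwa_states A. \<forall>\<sigma>. is_distr_on (pwa_states A) (pwa_trans A q \<sigma>))
     \<and> 0 < pwa_disc A \<and> pwa_disc A < 1"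

text \<open>Words are w :: nat => 'a, with w 0 the first letter sigma_1.
  A run r :: nat => nat encodes q_0 q_1 q_2 ...\<close>
definition is_run :: "'a pwa \<Rightarrow> (nat \<Rightarrow> 'a) \<Rightarrow> (nat \<Rightarrow> nat) \<Rightarrow> bool" where
  "is_run A w r \<longleftrightarrow> pwa_init A (r 0) > 0 \<and> (\<forall>i. pwa_trans A (r i) (w i) (r (Suc i)) > 0)"

definition weight_seq :: "'a pwa \<Rightarrow> (nat \<Rightarrow> 'a) \<Rightarrow> (nat \<Rightarrow> nat) \<Rightarrow> nat \<Rightarrow> real" where
  "weight_seq A w r i = real_of_rat (pwa_weight A (r i) (w i) (r (Suc i)))"

definition Disc :: "real \<Rightarrow> (nat \<Rightarrow> real) \<Rightarrow> real" where
  "Disc lam v = (\<Sum>i. lam ^ i * v i)"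

definition disc_val :: "'a pwa \<Rightarrow> (nat \<Rightarrow> 'a) \<Rightarrow> (nat \<Rightarrow> nat) \<Rightarrow> real" where
  "disc_val A w r = Disc (pwa_disc A) (weight_seq A w r)"

definition run_space :: "(nat \<Rightarrow> nat) measure" where
  "run_space = PiM UNIV (\<lambda>_. count_space UNIV)"

definition run_prob :: "'a pwa \<Rightarrow> (nat \<Rightarrow> 'a) \<Rightarrow> (nat \<Rightarrow> nat) measure" where
  "run_prob A w = (THE M. prob_space M \<and> sets M = sets run_space \<and>
     (\<forall>n q. emeasure M {r \<in> space M. \<forall>i\<le>n. r i = q i}
        = ennreal (pwa_init A (q 0) * (\<Prod>i<n. pwa_trans A (q i) (w i) (q (Suc i))))))"

definition NDisc_lang :: "'a pwa \<Rightarrow> (nat \<Rightarrow> 'a) \<Rightarrow> real" where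
  "NDisc_lang A w = Sup {disc_val A w r | r. is_run A w r}"

definition UDisc_lang :: "'a pwa \<Rightarrow> (nat \<Rightarrow> 'a) \<Rightarrow> real" where
  "UDisc_lang A w = Inf {disc_val A w r | r. is_run A w r}"

definition PosDisc_lang :: "'a pwa \<Rightarrow> (nat \<Rightarrow> 'a) \<Rightarrow> real" where
  "PosDisc_lang A w = Sup {\<eta>. measure (run_prob A w) {r \<in> space (run_prob A w). disc_val A w r \<ge> \<eta>} > 0}"

definition AsDisc_lang :: "'a pwa \<Rightarrow> (nat \<Rightarrow> 'a) \<Rightarrow> real" where
  "AsDisc_lang A w = Sup {\<eta>. measure (run_prob A w) {r \<in> space (run_prob A w). disc_val A w r \<ge> \<eta>} = 1}"

definition reducible :: "('a pwa \<Rightarrow> (nat \<Rightarrow> 'a) \<Rightarrow> real) \<Rightarrow> ('a pwa \<Rightarrow> (nat \<Rightarrow> 'a) \<Rightarrow> real) \<Rightarrow> bool" where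
  "reducible S1 S2 \<longleftrightarrow> (\<forall>A. wf_disc_aut A \<longrightarrow> (\<exists>B. wf_disc_aut B \<and> S1 A = S2 B))"

end

(*
  The discounted sum of the weights along a run is uniformly continuous for the prefix
  topology: the weights are bounded by some W, so runs sharing their first n + 1 states have
  values at most 2 W \<lambda>^n / (1 - \<lambda>) apart. Under the run measure almost every state sequence
  is a run, and every cylinder of a run has positive probability, so every neighbourhood of
  the value of a run is hit with positive probability. Consequently a threshold is exceeded
  with positive probability only up to the supremum of the run values, and almost surely
  exactly up to their infimum: on every automaton the positive semantics coincides with the
  nondeterministic one and the almost-sure semantics with the universal one, and the
  automaton itself witnesses each reduction.

  The run measure is given by a definite description; it exists as the image of a product
  of independent choices of successor states, and it is unique because the cylinders form
  an Int-stable generator of the product sigma-algebra.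
*)

theory Submission
  imports Defs
begin

section \<open>Cylinders of state sequences\<close>

definition cylinder :: "nat \<Rightarrow> (nat \<Rightarrow> nat) \<Rightarrow> (nat \<Rightarrow> nat) set" where
  "cylinder n q = {r. \<forall>i\<le>n. r i = q i}"

definition run_cylinders :: "(nat \<Rightarrow> nat) set set" where
  "run_cylinders = insert {} (range (\<lambda>(n, q). cylinder n q))"

lemma space_run_space [simp]: "space run_space = UNIV"
  by (simp add: run_space_def space_PiM)

lemma cylinder_in_run_space [measurable]: "cylinder n q \<in> sets run_space"
proof -
  have "cylinder n q = (\<Inter>i\<le>n. {r \<in> space run_space. r i = q i})"
    by (auto simp: cylinder_def)
  also have "\<dots> \<in> sets run_space"
    unfolding run_space_def by measurable
  finally show ?thesis .
qed

lemma sets_run_space_eq_sigma_cylinders: "sets run_space = sigma_sets UNIV run_cylinders"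
proof
  have "run_cylinders \<subseteq> sets run_space"
    by (auto simp: run_cylinders_def)
  from sets.sigma_sets_subset[OF this] show "sigma_sets UNIV run_cylinders \<subseteq> sets run_space"
    by simp
next
  interpret sigma_algebra UNIV "sigma_sets UNIV run_cylinders"
    by (rule sigma_algebra_sigma_sets) auto
  have "sets run_space = sigma_sets UNIV {{r. r i \<in> X} | i X. True}"
    unfolding run_space_def sets_PiM_single by (simp add: space_PiM)
  also have "\<dots> \<subseteq> sigma_sets UNIV run_cylinders"
  proof (rule sigma_sets_mono, safe)
    fix i and X :: "nat set"
    have "{r. r i \<in> X} = (\<Union>xs\<in>{xs. length xs = Suc i \<and> xs ! i \<in> X}. cylinder i ((!) xs))"
    proof safe
      fix r :: "nat \<Rightarrow> nat" assume "r i \<in> X"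
      then show "r \<in> (\<Union>xs\<in>{xs. length xs = Suc i \<and> xs ! i \<in> X}. cylinder i ((!) xs))"
        by (intro UN_I[of "map r [0..<Suc i]"]) (auto simp: cylinder_def simp del: upt_Suc)
    qed (auto simp: cylinder_def)
    also have "\<dots> \<in> sigma_sets UNIV run_cylinders"
      by (intro countable_UN) (auto simp: run_cylinders_def intro!: sigma_sets.Basic)
    finally show "{r. r i \<in> X} \<in> sigma_sets UNIV run_cylinders" .
  qed
  finally show "sets run_space \<subseteq> sigma_sets UNIV run_cylinders" .
qed

lemma cylinder_Int_cylinder:
  assumes "n \<le> m"
  shows "cylinder n q \<inter> cylinder m p = (if \<forall>i\<le>n. q i = p i then cylinder m p else {})"
  using assms by (auto simp: cylinder_def)

lemma Int_stable_run_cylinders: "Int_stable run_cylinders"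
proof -
  have "cylinder n q \<inter> cylinder m p \<in> run_cylinders" for n m q p
  proof (cases "n \<le> m")
    case True
    then show ?thesis by (force simp: cylinder_Int_cylinder run_cylinders_def)
  next
    case False
    then show ?thesis
      by (force simp: Int_commute[of "cylinder n q"] cylinder_Int_cylinder run_cylinders_def)
  qed
  then show ?thesis
    by (auto simp: Int_stable_def run_cylinders_def)
qed

section \<open>The run measure\<close>

definition prefix_prob :: "'a pwa \<Rightarrow> (nat \<Rightarrow> 'a) \<Rightarrow> (nat \<Rightarrow> nat) \<Rightarrow> nat \<Rightarrow> real" where
  "prefix_prob A w q n = pwa_init A (q 0) * (\<Prod>i<n. pwa_trans A (q i) (w i) (q (Suc i)))"

definition is_run_measure :: "'a pwa \<Rightarrow> (nat \<Rightarrow> 'a) \<Rightarrow> (nat \<Rightarrow> nat) measure \<Rightarrow> bool" where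
  "is_run_measure A w M \<longleftrightarrow> prob_space M \<and> sets M = sets run_space \<and>
     (\<forall>n q. emeasure M {r \<in> space M. \<forall>i\<le>n. r i = q i} = ennreal (prefix_prob A w q n))"

lemma run_prob_eq_The: "run_prob A w = (THE M. is_run_measure A w M)"
  unfolding run_prob_def is_run_measure_def prefix_prob_def ..

lemma space_is_run_measure: "is_run_measure A w M \<Longrightarrow> space M = UNIV"
  using sets_eq_imp_space_eq[of M run_space] by (simp add: is_run_measure_def)

lemma emeasure_is_run_measure_cylinder:
  "is_run_measure A w M \<Longrightarrow> emeasure M (cylinder n q) = ennreal (prefix_prob A w q n)"
  using space_is_run_measure[of A w M] by (simp add: is_run_measure_def cylinder_def)

lemma is_run_measure_unique:
  assumes M: "is_run_measure A w M" and N: "is_run_measure A w N"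
  shows "M = N"
proof (rule measure_eqI_generator_eq_countable[OF Int_stable_run_cylinders])
  show "sets M = sigma_sets UNIV run_cylinders" "sets N = sigma_sets UNIV run_cylinders"
    using M N by (simp_all add: is_run_measure_def sets_run_space_eq_sigma_cylinders)
  show "emeasure M X = emeasure N X" if "X \<in> run_cylinders" for X
    using that emeasure_is_run_measure_cylinder[OF M] emeasure_is_run_measure_cylinder[OF N]
    by (auto simp: run_cylinders_def)
  show "range (\<lambda>k. cylinder 0 (\<lambda>_. k)) \<subseteq> run_cylinders" "\<Union> (range (\<lambda>k. cylinder 0 (\<lambda>_. k))) = UNIV"
    by (auto simp: run_cylinders_def cylinder_def)
  show "emeasure M X \<noteq> \<infinity>" if "X \<in> range (\<lambda>k. cylinder 0 (\<lambda>_. k))" for X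
    using that emeasure_is_run_measure_cylinder[OF M] by auto
qed auto

lemma prefix_prob_Suc:
  "prefix_prob A w q (Suc n) = prefix_prob A w q n * pwa_trans A (q n) (w n) (q (Suc n))"
  by (simp add: prefix_prob_def mult.assoc)

lemma prefix_prob_cong:
  "(\<And>i. i \<le> n \<Longrightarrow> q i = q' i) \<Longrightarrow> prefix_prob A w q n = prefix_prob A w q' n"
  unfolding prefix_prob_def by (auto intro!: prod.cong)

lemma is_run_iff_prefix_prob_pos: "is_run A w r \<longleftrightarrow> (\<forall>n. 0 < prefix_prob A w r n)"
proof
  show "is_run A w r \<Longrightarrow> \<forall>n. 0 < prefix_prob A w r n"
    by (auto simp: is_run_def prefix_prob_def intro!: prod_pos mult_pos_pos)
next
  assume pos: "\<forall>n. 0 < prefix_prob A w r n"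
  have "0 < pwa_trans A (r i) (w i) (r (Suc i))" for i
    using pos[rule_format, of "Suc i"] pos[rule_format, of i]
    by (simp add: prefix_prob_Suc zero_less_mult_iff)
  moreover have "0 < pwa_init A (r 0)"
    using pos[rule_format, of 0] by (simp add: prefix_prob_def)
  ultimately show "is_run A w r"
    by (simp add: is_run_def)
qed

lemma prefix_prob_eq_0_outside_states:
  assumes wf: "wf_disc_aut A" and "q n \<notin> pwa_states A"
  shows "prefix_prob A w q n = 0"
  using assms(2)
proof (induction n)
  case 0
  then show ?case
    using wf by (simp add: prefix_prob_def wf_disc_aut_def is_distr_on_def)
next
  case (Suc n)
  show ?case
  proof (cases "q n \<in> pwa_states A")
    case True
    then show ?thesis
      using wf Suc.prems by (simp add: prefix_prob_Suc wf_disc_aut_def is_distr_on_def)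
  qed (simp add: prefix_prob_Suc Suc.IH)
qed

lemma pmf_embed_pmf_is_distr_on:
  assumes "finite Q" "is_distr_on Q d"
  shows "pmf (embed_pmf d) x = d x"
proof (rule pmf_embed_pmf)
  show "0 \<le> d x" for x
    using assms by (simp add: is_distr_on_def)
  have "(\<integral>\<^sup>+x. ennreal (d x) \<partial>count_space UNIV) = (\<Sum>x\<in>Q. ennreal (d x))"
    using assms by (intro nn_integral_count_space') (auto simp: is_distr_on_def)
  also have "\<dots> = 1"
    using assms by (simp add: is_distr_on_def sum_ennreal)
  finally show "(\<integral>\<^sup>+x. ennreal (d x) \<partial>count_space UNIV) = 1" .
qed

text \<open>A run is sampled from independent choices \<open>\<omega> (i, q)\<close>: the state at time \<open>i + 1\<close>
  is \<open>\<omega> (i + 1, q)\<close>, where \<open>q\<close> is the state at time \<open>i\<close>. Outside the state set the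
  choice is irrelevant, since such prefixes have probability zero.\<close>

definition step_pmf :: "'a pwa \<Rightarrow> (nat \<Rightarrow> 'a) \<Rightarrow> nat \<times> nat \<Rightarrow> nat pmf" where
  "step_pmf A w = (\<lambda>(i, q). case i of
       0 \<Rightarrow> embed_pmf (pwa_init A)
     | Suc j \<Rightarrow> if q \<in> pwa_states A then embed_pmf (pwa_trans A q (w j)) else return_pmf 0)"

definition choice_space :: "'a pwa \<Rightarrow> (nat \<Rightarrow> 'a) \<Rightarrow> (nat \<times> nat \<Rightarrow> nat) measure" where
  "choice_space A w = PiM UNIV (\<lambda>j. measure_pmf (step_pmf A w j))"

primrec sampled_run :: "(nat \<times> nat \<Rightarrow> nat) \<Rightarrow> nat \<Rightarrow> nat" where
  "sampled_run \<omega> 0 = \<omega> (0, 0)"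
| "sampled_run \<omega> (Suc n) = \<omega> (Suc n, sampled_run \<omega> n)"

definition used_choices :: "nat \<Rightarrow> (nat \<Rightarrow> nat) \<Rightarrow> (nat \<times> nat) set" where
  "used_choices n q = insert (0, 0) ((\<lambda>i. (Suc i, q i)) ` {..<n})"

lemma measurable_choice: "(\<lambda>\<omega>. \<omega> j) \<in> measurable (choice_space A w) (count_space UNIV)"
proof -
  have "(\<lambda>\<omega>. \<omega> j) \<in> measurable (choice_space A w) (measure_pmf (step_pmf A w j))"
    unfolding choice_space_def by (rule measurable_component_singleton) simp
  then show ?thesis
    by (simp add: measurable_cong_sets)
qed

lemma measurable_sampled_run: "sampled_run \<in> measurable (choice_space A w) run_space"
proof -
  have "(\<lambda>\<omega>. sampled_run \<omega> n) \<in> measurable (choice_space A w) (count_space UNIV)" for n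
  proof (induction n)
    case (Suc n)
    show ?case
      using measurable_compose_countable[where f = "\<lambda>q \<omega>. \<omega> (Suc n, q)", OF measurable_choice Suc]
      by simp
  qed (simp add: measurable_choice)
  then show ?thesis
    unfolding run_space_def by (intro measurable_PiM_single') auto
qed

lemma sampled_run_in_cylinder_iff:
  "sampled_run \<omega> \<in> cylinder n q \<longleftrightarrow> (\<forall>j\<in>used_choices n q. \<omega> j = q (fst j))"
proof (induction n)
  case (Suc n)
  have "sampled_run \<omega> \<in> cylinder (Suc n) q \<longleftrightarrow>
      sampled_run \<omega> \<in> cylinder n q \<and> sampled_run \<omega> (Suc n) = q (Suc n)"
    by (auto simp: cylinder_def le_Suc_eq)
  also have "\<dots> \<longleftrightarrow> sampled_run \<omega> \<in> cylinder n q \<and> \<omega> (Suc n, q n) = q (Suc n)"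
    by (auto simp: cylinder_def)
  also have "\<dots> \<longleftrightarrow> (\<forall>j\<in>used_choices (Suc n) q. \<omega> j = q (fst j))"
    by (auto simp: Suc used_choices_def lessThan_Suc)
  finally show ?case .
qed (simp add: cylinder_def used_choices_def)

lemma pmf_step_pmf_prod_eq_prefix_prob:
  assumes wf: "wf_disc_aut A"
  shows "pmf (step_pmf A w (0, 0)) (q 0) * (\<Prod>i<n. pmf (step_pmf A w (Suc i, q i)) (q (Suc i)))
    = prefix_prob A w q n" (is "?lhs n = _")
proof (induction n)
  case 0
  then show ?case
    using wf by (auto simp: step_pmf_def prefix_prob_def wf_disc_aut_def pmf_embed_pmf_is_distr_on)
next
  case (Suc n)
  have "?lhs (Suc n) = prefix_prob A w q n * pmf (step_pmf A w (Suc n, q n)) (q (Suc n))"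
    by (simp flip: Suc.IH add: mult.assoc)
  also have "\<dots> = prefix_prob A w q (Suc n)"
  proof (cases "q n \<in> pwa_states A")
    case True
    then show ?thesis
      using wf by (auto simp: prefix_prob_Suc step_pmf_def wf_disc_aut_def pmf_embed_pmf_is_distr_on)
  next
    case False
    then show ?thesis
      by (simp add: prefix_prob_Suc prefix_prob_eq_0_outside_states[OF wf])
  qed
  finally show ?case .
qed

lemma ex_is_run_measure:
  assumes wf: "wf_disc_aut A"
  shows "\<exists>M. is_run_measure A w M"
proof -
  have "prob_space (choice_space A w)"
    unfolding choice_space_def by (rule prob_space_PiM) (simp add: prob_space_measure_pmf)
  define M where "M = distr (choice_space A w) run_space sampled_run"
  have "emeasure M (cylinder n q) = ennreal (prefix_prob A w q n)" for n q
  proof -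
    have "sampled_run -` cylinder n q = prod_emb UNIV (\<lambda>j. measure_pmf (step_pmf A w j))
        (used_choices n q) (Pi\<^sub>E (used_choices n q) (\<lambda>j. {q (fst j)}))"
      by (auto simp: prod_emb_iff sampled_run_in_cylinder_iff PiE_iff)
    then have "emeasure M (cylinder n q)
        = (\<Prod>j\<in>used_choices n q. emeasure (measure_pmf (step_pmf A w j)) {q (fst j)})"
      unfolding M_def choice_space_def
      by (simp add: emeasure_distr measurable_sampled_run[unfolded choice_space_def])
        (auto simp: used_choices_def prob_space_measure_pmf intro!: emeasure_PiM_emb)
    also have "\<dots> = ennreal (\<Prod>j\<in>used_choices n q. pmf (step_pmf A w j) (q (fst j)))"
      by (simp add: emeasure_pmf_single prod_ennreal)
    also have "(\<Prod>j\<in>used_choices n q. pmf (step_pmf A w j) (q (fst j))) = prefix_prob A w q n"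
      unfolding used_choices_def pmf_step_pmf_prod_eq_prefix_prob[OF wf, symmetric]
      by (subst prod.insert) (auto simp: prod.reindex inj_on_def)
    finally show ?thesis .
  qed
  moreover have "sets M = sets run_space" "space M = UNIV"
    by (simp_all add: M_def)
  ultimately have "is_run_measure A w M"
    using prob_space.prob_space_distr[OF \<open>prob_space (choice_space A w)\<close> measurable_sampled_run]
    by (simp add: is_run_measure_def M_def cylinder_def)
  then show ?thesis ..
qed

lemma is_run_measure_run_prob: "wf_disc_aut A \<Longrightarrow> is_run_measure A w (run_prob A w)"
  unfolding run_prob_eq_The
  by (metis ex_is_run_measure is_run_measure_unique theI)

section \<open>Discounted sums\<close>

lemma abs_suminf_le_geometric_tail:
  fixes f :: "nat \<Rightarrow> real"
  assumes lam: "0 < lam" "lam < 1"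
    and zero: "\<And>i. i < n \<Longrightarrow> f i = 0" and bound: "\<And>i. \<bar>f i\<bar> \<le> c * lam ^ i"
  shows "\<bar>suminf f\<bar> \<le> c * lam ^ n / (1 - lam)"
proof -
  have geom: "summable (\<lambda>i. c * lam ^ n * lam ^ i)"
    using lam by (intro summable_mult summable_geometric) auto
  have tail_bound: "norm (f (i + n)) \<le> c * lam ^ n * lam ^ i" for i
    using bound[of "i + n"] by (simp add: power_add mult_ac)
  have tail: "summable (\<lambda>i. norm (f (i + n)))"
    by (rule summable_comparison_test'[OF geom]) (use tail_bound in auto)
  have "summable f"
    using summable_norm_cancel[OF tail] summable_iff_shift[of f n] by simp
  then have "suminf f = (\<Sum>i. f (i + n))"
    using suminf_split_initial_segment[of f n] zero by simp
  also have "\<bar>\<dots>\<bar> \<le> (\<Sum>i. norm (f (i + n)))"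
    using summable_norm[OF tail] by simp
  also have "\<dots> \<le> (\<Sum>i. c * lam ^ n * lam ^ i)"
    by (rule suminf_le[OF tail_bound tail geom])
  also have "\<dots> = c * lam ^ n / (1 - lam)"
    using lam by (simp add: suminf_mult suminf_geometric)
  finally show ?thesis .
qed

lemma summable_Disc_terms:
  fixes v :: "nat \<Rightarrow> real"
  assumes "0 < lam" "lam < 1" and "\<And>i. \<bar>v i\<bar> \<le> W"
  shows "summable (\<lambda>i. lam ^ i * v i)"
proof (rule summable_comparison_test')
  show "summable (\<lambda>i. W * lam ^ i)"
    using assms by (intro summable_mult summable_geometric) auto
  show "norm (lam ^ i * v i) \<le> W * lam ^ i" for i
    using assms by (simp add: abs_mult mult.commute mult_left_mono)
qed

lemma abs_Disc_le:
  fixes v :: "nat \<Rightarrow> real"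
  assumes lam: "0 < lam" "lam < 1" and "\<And>i. \<bar>v i\<bar> \<le> W"
  shows "\<bar>Disc lam v\<bar> \<le> W / (1 - lam)"
  unfolding Disc_def
  using abs_suminf_le_geometric_tail[OF lam, of 0 "\<lambda>i. lam ^ i * v i" W] assms
  by (simp add: abs_mult mult.commute mult_left_mono)

lemma abs_Disc_diff_le:
  fixes v v' :: "nat \<Rightarrow> real"
  assumes lam: "0 < lam" "lam < 1" and v: "\<And>i. \<bar>v i\<bar> \<le> W" and v': "\<And>i. \<bar>v' i\<bar> \<le> W"
    and eq: "\<And>i. i < n \<Longrightarrow> v i = v' i"
  shows "\<bar>Disc lam v - Disc lam v'\<bar> \<le> 2 * W * lam ^ n / (1 - lam)"
proof -
  have "Disc lam v - Disc lam v' = (\<Sum>i. lam ^ i * (v i - v' i))"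
    unfolding Disc_def right_diff_distrib
    by (rule suminf_diff[OF summable_Disc_terms[OF lam v] summable_Disc_terms[OF lam v']])
  also have "\<bar>\<dots>\<bar> \<le> 2 * W * lam ^ n / (1 - lam)"
  proof (rule abs_suminf_le_geometric_tail[OF lam])
    show "lam ^ i * (v i - v' i) = 0" if "i < n" for i
      using eq[OF that] by simp
    show "\<bar>lam ^ i * (v i - v' i)\<bar> \<le> 2 * W * lam ^ i" for i
      using v[of i] v'[of i] lam by (simp add: abs_mult mult.commute mult_left_mono)
  qed
  finally show ?thesis .
qed

section \<open>Runs and their values\<close>

lemma is_distr_on_ex_pos: "is_distr_on Q d \<Longrightarrow> \<exists>q\<in>Q. 0 < d q"
  unfolding is_distr_on_def by (metis less_eq_real_def sum.neutral zero_neq_one)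

lemma mem_if_is_distr_on_pos: "is_distr_on Q d \<Longrightarrow> 0 < d q \<Longrightarrow> q \<in> Q"
  unfolding is_distr_on_def by force

lemma run_state_in_states:
  assumes wf: "wf_disc_aut A" and r: "is_run A w r"
  shows "r i \<in> pwa_states A"
proof (induction i)
  case 0
  show ?case
    using wf r by (intro mem_if_is_distr_on_pos[of _ "pwa_init A"]) (simp_all add: wf_disc_aut_def is_run_def)
next
  case (Suc i)
  show ?case
    using wf r Suc
    by (intro mem_if_is_distr_on_pos[of _ "pwa_trans A (r i) (w i)"]) (simp_all add: wf_disc_aut_def is_run_def)
qed
lemma ex_run:
  assumes wf: "wf_disc_aut A"
  shows "\<exists>r. is_run A w r"
proof -
  let ?Q = "pwa_states A"
  obtain q0 where q0: "q0 \<in> ?Q" "0 < pwa_init A q0"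
    using wf is_distr_on_ex_pos unfolding wf_disc_aut_def by blast
  define next_state where "next_state q a = (SOME s. s \<in> ?Q \<and> 0 < pwa_trans A q a s)" for q a
  have next_state: "next_state q a \<in> ?Q \<and> 0 < pwa_trans A q a (next_state q a)" if "q \<in> ?Q" for q a
  proof -
    have "\<exists>s. s \<in> ?Q \<and> 0 < pwa_trans A q a s"
      using wf that is_distr_on_ex_pos[of ?Q "pwa_trans A q a"] by (auto simp: wf_disc_aut_def)
    from someI_ex[OF this] show ?thesis
      unfolding next_state_def .
  qed
  define r where "r = rec_nat q0 (\<lambda>n q. next_state q (w n))"
  have r_in_Q: "r n \<in> ?Q" for n
    by (induction n) (simp_all add: r_def q0 next_state)
  have "is_run A w r"
    using q0 next_state[OF r_in_Q] by (simp add: is_run_def r_def)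
  then show ?thesis by blast
qed

definition max_abs_weight :: "'a::finite pwa \<Rightarrow> real" where
  "max_abs_weight A = Max (insert 0
     ((\<lambda>(q, a, s). \<bar>real_of_rat (pwa_weight A q a s)\<bar>) ` (pwa_states A \<times> UNIV \<times> pwa_states A)))"

lemma abs_weight_seq_le:
  assumes wf: "wf_disc_aut (A :: 'a::finite pwa)" and r: "is_run A w r"
  shows "\<bar>weight_seq A w r i\<bar> \<le> max_abs_weight A"
proof -
  have "(r i, w i, r (Suc i)) \<in> pwa_states A \<times> UNIV \<times> pwa_states A"
    using run_state_in_states[OF wf r] by simp
  then show ?thesis
    using wf unfolding max_abs_weight_def weight_seq_def wf_disc_aut_def
    by (intro Max_ge) force+
qed

lemma abs_disc_val_le:
  "wf_disc_aut (A :: 'a::finite pwa) \<Longrightarrow> is_run A w r \<Longrightarrow> \<bar>disc_val A w r\<bar> \<le> max_abs_weight A / (1 - pwa_disc A)"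
  unfolding disc_val_def by (rule abs_Disc_le) (auto simp: wf_disc_aut_def abs_weight_seq_le)

lemma disc_val_prefix_continuous:
  assumes wf: "wf_disc_aut (A :: 'a::finite pwa)" and eps: "0 < eps"
  shows "\<exists>n. \<forall>r r'. is_run A w r \<longrightarrow> is_run A w r' \<longrightarrow> (\<forall>i\<le>n. r i = r' i) \<longrightarrow>
           \<bar>disc_val A w r - disc_val A w r'\<bar> < eps"
proof -
  let ?lam = "pwa_disc A" and ?W = "max_abs_weight A"
  have lam: "0 < ?lam" "?lam < 1"
    using wf by (simp_all add: wf_disc_aut_def)
  have "(\<lambda>n. 2 * ?W * ?lam ^ n / (1 - ?lam)) \<longlonglongrightarrow> 2 * ?W * 0 / (1 - ?lam)"
    using lam by (intro tendsto_intros LIMSEQ_power_zero) auto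
  from order_tendstoD(2)[OF this] eps
  obtain n where n: "2 * ?W * ?lam ^ n / (1 - ?lam) < eps"
    by (auto simp: eventually_sequentially)
  have "\<bar>disc_val A w r - disc_val A w r'\<bar> < eps"
    if "is_run A w r" "is_run A w r'" "\<forall>i\<le>n. r i = r' i" for r r'
  proof -
    have "\<bar>disc_val A w r - disc_val A w r'\<bar> \<le> 2 * ?W * ?lam ^ n / (1 - ?lam)"
      unfolding disc_val_def
      by (rule abs_Disc_diff_le[OF lam abs_weight_seq_le[OF wf that(1)] abs_weight_seq_le[OF wf that(2)]])
        (simp add: weight_seq_def that(3))
    then show ?thesis
      using n by linarith
  qed
  then show ?thesis
    by blast
qed

section \<open>Positive and almost-sure semantics\<close>

lemma cSup_eq_cSup_approx:
  fixes S T :: "real set"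
  assumes T: "T \<noteq> {}" "bdd_above T"
    and dominated: "\<And>x. x \<in> S \<Longrightarrow> \<exists>y\<in>T. x \<le> y"
    and approx: "\<And>y e. y \<in> T \<Longrightarrow> 0 < e \<Longrightarrow> \<exists>x\<in>S. y - e \<le> x"
  shows "Sup S = Sup T"
proof (rule antisym)
  obtain y0 where "y0 \<in> T"
    using T(1) by blast
  with approx[of y0 1] have S: "S \<noteq> {}"
    by auto
  have upper_T: "x \<le> Sup T" if x: "x \<in> S" for x
  proof -
    obtain y where "y \<in> T" "x \<le> y"
      using dominated[OF x] by blast
    with cSup_upper[OF _ T(2)] show ?thesis
      by fastforce
  qed
  then show "Sup S \<le> Sup T"
    by (rule cSup_least[OF S])
  have "bdd_above S"
    using upper_T by (rule bdd_aboveI)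
  show "Sup T \<le> Sup S"
  proof (rule cSup_least[OF T(1)])
    fix y assume "y \<in> T"
    show "y \<le> Sup S"
    proof (rule field_le_epsilon)
      fix e :: real assume "0 < e"
      with approx[OF \<open>y \<in> T\<close>] obtain x where "x \<in> S" "y - e \<le> x"
        by blast
      moreover have "x \<le> Sup S"
        using \<open>x \<in> S\<close> \<open>bdd_above S\<close> by (rule cSup_upper)
      ultimately show "y \<le> Sup S + e"
        by linarith
    qed
  qed
qed
lemma borel_measurable_disc_val [measurable]: "disc_val A w \<in> borel_measurable run_space"
proof -
  have state: "(\<lambda>r. r i) \<in> measurable run_space (count_space UNIV)" for i
    unfolding run_space_def by (rule measurable_component_singleton) simp
  have "(\<lambda>r. weight_seq A w r i) \<in> borel_measurable run_space" for i
    unfolding weight_seq_def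
    by (rule measurable_compose_countable[OF _ state])
      (rule measurable_compose_countable[OF _ state], simp)
  then show ?thesis
    unfolding disc_val_def Disc_def
    by (intro borel_measurable_suminf borel_measurable_times measurable_const) auto
qed

definition run_values :: "'a pwa \<Rightarrow> (nat \<Rightarrow> 'a) \<Rightarrow> real set" where
  "run_values A w = {disc_val A w r | r. is_run A w r}"

lemma disc_val_ge_in_run_space: "{r. \<eta> \<le> disc_val A w r} \<in> sets run_space"
proof -
  have "{r \<in> space run_space. \<eta> \<le> disc_val A w r} \<in> sets run_space"
    by measurable
  then show ?thesis
    by simp
qed

lemma disc_val_near_in_run_space: "{r. \<bar>disc_val A w r - c\<bar> < e} \<in> sets run_space"
proof -
  have "{r \<in> space run_space. \<bar>disc_val A w r - c\<bar> < e} \<in> sets run_space"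
    by measurable
  then show ?thesis
    by simp
qed

context
  fixes A :: "'a::finite pwa" and w :: "nat \<Rightarrow> 'a"
  assumes wf: "wf_disc_aut A"
begin

lemma space_run_prob [simp]: "space (run_prob A w) = UNIV"
  by (rule space_is_run_measure[OF is_run_measure_run_prob[OF wf, of w]])

lemma sets_run_prob [simp]: "sets (run_prob A w) = sets run_space"
  using is_run_measure_run_prob[OF wf, of w] by (simp add: is_run_measure_def)

lemma prob_space_run_prob: "prob_space (run_prob A w)"
  using is_run_measure_run_prob[OF wf, of w] by (simp add: is_run_measure_def)

lemma measure_run_prob_cylinder_pos: "is_run A w r \<Longrightarrow> 0 < measure (run_prob A w) (cylinder n r)"
  using emeasure_is_run_measure_cylinder[OF is_run_measure_run_prob[OF wf, of w]]
  by (simp add: measure_def is_run_iff_prefix_prob_pos less_imp_le)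

lemma AE_prefix_prob_pos: "AE r in run_prob A w. 0 < prefix_prob A w r n"
proof -
  have "AE r in run_prob A w. \<forall>xs. r \<in> cylinder n ((!) xs) \<longrightarrow> 0 < prefix_prob A w ((!) xs) n"
    unfolding AE_all_countable
  proof
    fix xs :: "nat list"
    show "AE r in run_prob A w. r \<in> cylinder n ((!) xs) \<longrightarrow> 0 < prefix_prob A w ((!) xs) n"
    proof (cases "0 < prefix_prob A w ((!) xs) n")
      case False
      then have "cylinder n ((!) xs) \<in> null_sets (run_prob A w)"
        using emeasure_is_run_measure_cylinder[OF is_run_measure_run_prob[OF wf, of w], of n "(!) xs"]
        by (simp add: null_sets_def ennreal_eq_0_iff)
      then show ?thesis
        by (rule AE_I') auto
    qed simp
  qed
  then show ?thesis
  proof (rule eventually_mono)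
    fix r
    assume all_prefixes: "\<forall>xs. r \<in> cylinder n ((!) xs) \<longrightarrow> 0 < prefix_prob A w ((!) xs) n"
    let ?xs = "map r [0..<Suc n]"
    have prefix: "?xs ! i = r i" if "i \<le> n" for i
      using that by (simp del: upt_Suc)
    then have "0 < prefix_prob A w ((!) ?xs) n"
      using all_prefixes by (simp add: cylinder_def del: upt_Suc)
    moreover have "prefix_prob A w ((!) ?xs) n = prefix_prob A w r n"
      by (rule prefix_prob_cong) (rule prefix)
    ultimately show "0 < prefix_prob A w r n"
      by linarith
  qed
qed

lemma AE_is_run: "AE r in run_prob A w. is_run A w r"
  using AE_prefix_prob_pos by (simp add: is_run_iff_prefix_prob_pos AE_all_countable)

text \<open>The neighbourhood contains a cylinder of the run, by uniform continuity of the
  discounted sum in the prefix topology.\<close>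

lemma measure_disc_val_near_run_pos:
  assumes r: "is_run A w r" and eps: "0 < eps"
  shows "0 < measure (run_prob A w) {r'. \<bar>disc_val A w r' - disc_val A w r\<bar> < eps}"
proof -
  interpret prob_space "run_prob A w"
    by (rule prob_space_run_prob)
  obtain n where n: "\<And>r r'. is_run A w r \<Longrightarrow> is_run A w r' \<Longrightarrow> \<forall>i\<le>n. r i = r' i \<Longrightarrow>
      \<bar>disc_val A w r - disc_val A w r'\<bar> < eps"
    using disc_val_prefix_continuous[OF wf eps] by blast
  have "AE r' in run_prob A w. r' \<in> cylinder n r \<longrightarrow> r' \<in> {r'. \<bar>disc_val A w r' - disc_val A w r\<bar> < eps}"
    using AE_is_run
  proof eventually_elim
    case (elim r')
    show ?case
      using n[OF elim r] by (simp add: cylinder_def abs_minus_commute)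
  qed
  then have "prob (cylinder n r) \<le> prob {r'. \<bar>disc_val A w r' - disc_val A w r\<bar> < eps}"
    by (rule finite_measure_mono_AE) (simp add: disc_val_near_in_run_space)
  with measure_run_prob_cylinder_pos[OF r, of n] show ?thesis
    by linarith
qed

lemma ex_run_disc_val_ge:
  assumes "0 < measure (run_prob A w) {r. \<eta> \<le> disc_val A w r}"
  shows "\<exists>r. is_run A w r \<and> \<eta> \<le> disc_val A w r"
proof (rule ccontr)
  assume no_run: "\<nexists>r. is_run A w r \<and> \<eta> \<le> disc_val A w r"
  have "AE r in run_prob A w. r \<notin> {r. \<eta> \<le> disc_val A w r}"
    using AE_is_run by eventually_elim (use no_run in auto)
  then have "measure (run_prob A w) {r. \<eta> \<le> disc_val A w r} = 0"
    by (simp add: AE_iff_measurable[OF _ refl] disc_val_ge_in_run_space measure_def)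
  with assms show False
    by simp
qed

lemma le_disc_val_if_almost_sure:
  assumes as: "measure (run_prob A w) {r'. \<eta> \<le> disc_val A w r'} = 1" and r: "is_run A w r"
  shows "\<eta> \<le> disc_val A w r"
proof (rule ccontr)
  interpret prob_space "run_prob A w"
    by (rule prob_space_run_prob)
  assume "\<not> \<eta> \<le> disc_val A w r"
  let ?near = "{r'. \<bar>disc_val A w r' - disc_val A w r\<bar> < \<eta> - disc_val A w r}"
  have "{r'. \<eta> \<le> disc_val A w r'} \<inter> ?near = {}"
    by auto
  then have "prob ({r'. \<eta> \<le> disc_val A w r'} \<union> ?near) = 1 + prob ?near"
    using as by (subst finite_measure_Union) (simp_all add: disc_val_ge_in_run_space disc_val_near_in_run_space)
  moreover have "0 < prob ?near"
    using measure_disc_val_near_run_pos[OF r] \<open>\<not> \<eta> \<le> disc_val A w r\<close> by simp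
  ultimately show False
    using prob_le_1[of "{r'. \<eta> \<le> disc_val A w r'} \<union> ?near"] by linarith
qed

lemma run_values_nonempty: "run_values A w \<noteq> {}"
  using ex_run[OF wf] by (auto simp: run_values_def)

lemma bdd_run_values: "bdd_above (run_values A w)" "bdd_below (run_values A w)"
proof -
  let ?B = "max_abs_weight A / (1 - pwa_disc A)"
  have bound: "\<bar>v\<bar> \<le> ?B" if "v \<in> run_values A w" for v
    using that abs_disc_val_le[OF wf] by (auto simp: run_values_def)
  show "bdd_above (run_values A w)"
    using bound by (intro bdd_aboveI[of _ ?B]) (simp add: abs_le_iff)
  show "bdd_below (run_values A w)"
    using bound by (intro bdd_belowI[of _ "- ?B"]) (simp add: abs_le_iff minus_le_iff)
qed

lemma PosDisc_lang_eq_NDisc_lang: "PosDisc_lang A w = NDisc_lang A w"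
  unfolding PosDisc_lang_def NDisc_lang_def run_values_def[symmetric] space_run_prob
proof (rule cSup_eq_cSup_approx[OF run_values_nonempty bdd_run_values(1)])
  show "\<exists>v\<in>run_values A w. \<eta> \<le> v"
    if "\<eta> \<in> {\<eta>. 0 < measure (run_prob A w) {r \<in> UNIV. \<eta> \<le> disc_val A w r}}" for \<eta>
    using ex_run_disc_val_ge[of \<eta>] that by (auto simp: run_values_def)
  show "\<exists>\<eta>\<in>{\<eta>. 0 < measure (run_prob A w) {r \<in> UNIV. \<eta> \<le> disc_val A w r}}. v - e \<le> \<eta>"
    if v: "v \<in> run_values A w" and e: "0 < e" for v e
  proof -
    interpret prob_space "run_prob A w"
      by (rule prob_space_run_prob)
    obtain r where r: "is_run A w r" "v = disc_val A w r"
      using v unfolding run_values_def by blast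
    have "prob {r'. \<bar>disc_val A w r' - v\<bar> < e} \<le> prob {r'. v - e \<le> disc_val A w r'}"
      by (intro finite_measure_mono) (auto simp: disc_val_ge_in_run_space)
    with measure_disc_val_near_run_pos[OF r(1) e, folded r(2)]
    have "0 < prob {r'. v - e \<le> disc_val A w r'}"
      by linarith
    then show ?thesis
      by (intro bexI[of _ "v - e"]) simp_all
  qed
qed

lemma AsDisc_lang_eq_UDisc_lang: "AsDisc_lang A w = UDisc_lang A w"
  unfolding AsDisc_lang_def UDisc_lang_def run_values_def[symmetric] space_run_prob
proof (rule cSup_eq_maximum)
  interpret prob_space "run_prob A w"
    by (rule prob_space_run_prob)
  have "AE r in run_prob A w. Inf (run_values A w) \<le> disc_val A w r"
    using AE_is_run
  proof eventually_elim
    case (elim r)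
    show ?case
      by (rule cInf_lower[OF _ bdd_run_values(2)]) (use elim in \<open>auto simp: run_values_def\<close>)
  qed
  then show "Inf (run_values A w)
      \<in> {\<eta>. measure (run_prob A w) {r \<in> UNIV. \<eta> \<le> disc_val A w r} = 1}"
    using prob_Collect_eq_1[of "\<lambda>r. Inf (run_values A w) \<le> disc_val A w r"]
    by (simp add: disc_val_ge_in_run_space)
  show "\<eta> \<le> Inf (run_values A w)"
    if "\<eta> \<in> {\<eta>. measure (run_prob A w) {r \<in> UNIV. \<eta> \<le> disc_val A w r} = 1}" for \<eta>
  proof (rule cInf_greatest[OF run_values_nonempty])
    fix v assume "v \<in> run_values A w"
    then obtain r where "is_run A w r" "v = disc_val A w r"
      unfolding run_values_def by blast
    with that show "\<eta> \<le> v"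
      using le_disc_val_if_almost_sure by simp
  qed
qed

end

lemma reducible_if_eq:
  "(\<And>A. wf_disc_aut A \<Longrightarrow> S1 A = S2 A) \<Longrightarrow> reducible S1 S2"
  unfolding reducible_def by blast

theorem theorem5:
  shows "(reducible (NDisc_lang :: ('a::finite) pwa \<Rightarrow> _) PosDisc_lang \<and> reducible (PosDisc_lang :: 'a pwa \<Rightarrow> _) NDisc_lang)
       \<and> (reducible (UDisc_lang :: 'a pwa \<Rightarrow> _) AsDisc_lang \<and> reducible (AsDisc_lang :: 'a pwa \<Rightarrow> _) UDisc_lang)"
proof -
  have "PosDisc_lang A = NDisc_lang A" "AsDisc_lang A = UDisc_lang A"
    if "wf_disc_aut (A :: 'a pwa)" for A
    using PosDisc_lang_eq_NDisc_lang[OF that] AsDisc_lang_eq_UDisc_lang[OF that] by auto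
  then show ?thesis
    by (intro conjI reducible_if_eq) simp_all
qed

end
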